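(* Let $F\ge1$, $N_{\max}\ge1$, and let $\mathcal{L}$ be the collection of local environments with at most $N_{\max}$ elements. For $o\in\mathrm{O}(3)$ and $\mathrm{LE}\in\mathcal{L}$ put $o(\mathrm{LE})=\{(s,xo^T):(s,x)\in\mathrm{LE}\}$; call $g:\mathcal{L}\to\mathbb{R}^{3\times3}$ $\mathrm{O}(3)$-equivariant if $g(o(\mathrm{LE}))=g(\mathrm{LE})o^T$ for all $o\in\mathrm{O}(3)$ and $\mathrm{LE}\in\mathcal{L}$. Then: (a) there exists an $\mathrm{O}(3)$-equivariant $g:\mathcal{L}\to\mathbb{R}^{3\times 3}$ such that, for every $\mathrm{LE}\in\mathcal{L}$, $g(\mathrm{LE})$ has full rank if and only if there is no $o\in\mathrm{O}(3)$ with $o\neq I$ and $o(\mathrm{LE})=\mathrm{LE}$; (b) for every $\mathrm{O}(3)$-equivariant $g:\mathcal{L}\to\mathbb{R}^{3\times 3}$ and every $\mathrm{LE}\in\mathcal{L}$, if $g(\mathrm{LE})$ has full rank then there is no $o\in\mathrm{O}(3)$, $o\ne I$, with $o(\mathrm{LE})=\mathrm{LE}$.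
   Context: A local environment is a finite set $\mathrm{LE}=\{(s_j,x_j)\}$ of pairs with $s_j\in\mathbb{R}^F$ (scalar atom features) and $x_j\in\mathbb{R}^{1\times 3}$ (relative positions of neighbours of a center atom). $\mathrm{O}(3)=\{Q\in\mathbb{R}^{3\times3}: QQ^T=I\}$ and $I$ is the $3\times3$ identity matrix. *)

theory Defs
  imports "HOL-Analysis.Analysis"
begin

text \<open>A local environment: a finite set of pairs (s, x), s a feature vector in R^F
  (index type 'f, F = CARD('f) \<ge> 1), x a row vector in R^{1x3} represented as real^3.\<close>

type_synonym 'f local_env = "((real^'f) \<times> (real^3)) set"

definition LEs :: "nat \<Rightarrow> 'f::finite local_env set" where
  "LEs Nmax = {LE. finite LE \<and> card LE \<le> Nmax}"

definition act :: "real^3^3 \<Rightarrow> 'f::finite local_env \<Rightarrow> 'f local_env" where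
  "act Q LE = (\<lambda>(s, x). (s, x v* transpose Q)) ` LE"

definition O3_equivariant :: "nat \<Rightarrow> ('f::finite local_env \<Rightarrow> real^3^3) \<Rightarrow> bool" where
  "O3_equivariant Nmax g \<longleftrightarrow>
     (\<forall>Q LE. orthogonal_matrix Q \<and> LE \<in> LEs Nmax \<longrightarrow> g (act Q LE) = g LE ** transpose Q)"

end

theory Submission
  imports Defs
begin

text \<open>
  (b) If an orthogonal \<open>Q\<close> fixes \<open>LE\<close>, equivariance gives \<open>g LE = g LE ** transpose Q\<close>,
  and cancelling the invertible matrix \<open>g LE\<close> forces \<open>Q = I\<close>.

  (a) Pick a representative in every \<open>O(3)\<close>-orbit. On an orbit whose elements have a nontrivial
  symmetry (a property shared by the whole orbit, since stabilisers of one orbit are conjugate)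
  let \<open>g = 0\<close>. On any other orbit the orthogonal \<open>Q\<close> carrying the representative to \<open>LE\<close> is
  unique, and \<open>g LE = transpose Q\<close> is equivariant and of full rank.
\<close>

lemma act_act: "act P (act Q LE) = act (P ** Q) LE"
  unfolding act_def image_comp
  by (rule image_cong)
     (auto simp: vector_matrix_mul_assoc[symmetric] matrix_transpose_mul
           simp del: transpose_matrix_vector)

lemma act_mat_1 [simp]: "act (mat 1) LE = LE"
  unfolding act_def by auto

lemma act_transpose_act:
  "orthogonal_matrix Q \<Longrightarrow> act (transpose Q) (act Q LE) = LE"
  by (simp add: act_act orthogonal_matrix)

lemma rank_orthogonal_matrix:
  fixes Q :: "real^'n^'n"
  assumes "orthogonal_matrix Q"
  shows "rank Q = CARD('n)"
proof -
  have "det Q \<noteq> 0"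
    using det_orthogonal_matrix[OF assms] by auto
  then show ?thesis
    using det_eq_0_rank[of Q] rank_bound[of Q] by simp
qed

lemma full_rank_imp_invertible:
  fixes A :: "real^'n^'n"
  assumes "rank A = CARD('n)"
  shows "invertible A"
  using assms det_eq_0_rank[of A] by (simp add: invertible_det_nz)

lemma invertible_mult_right_eq_self:
  fixes A B :: "'a::field^'n^'n"
  assumes "invertible A" and "A ** B = A"
  shows "B = mat 1"
proof -
  obtain A' where A': "A' ** A = mat 1"
    using assms(1) by (auto simp: invertible_left_inverse)
  have "B = (A' ** A) ** B" by (simp add: A')
  also have "\<dots> = A' ** A" by (simp add: matrix_mul_assoc[symmetric] assms(2))
  finally show ?thesis by (simp add: A')
qed

definition has_nontrivial_symmetry :: "'f::finite local_env \<Rightarrow> bool" where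
  "has_nontrivial_symmetry LE \<longleftrightarrow> (\<exists>Q. orthogonal_matrix Q \<and> Q \<noteq> mat 1 \<and> act Q LE = LE)"

lemma has_nontrivial_symmetry_act_imp:
  assumes "has_nontrivial_symmetry LE" and P: "orthogonal_matrix P"
  shows "has_nontrivial_symmetry (act P LE)"
proof -
  obtain Q where Q: "orthogonal_matrix Q" "Q \<noteq> mat 1" "act Q LE = LE"
    using assms(1) by (auto simp: has_nontrivial_symmetry_def)
  let ?R = "P ** Q ** transpose P"
  have "act ?R (act P LE) = act P (act Q (act (transpose P ** P) LE))"
    by (simp add: act_act matrix_mul_assoc)
  also have "\<dots> = act P LE"
    using Q P by (simp add: orthogonal_matrix)
  finally have fixes_act: "act ?R (act P LE) = act P LE" .
  have "Q = transpose P ** ?R ** P"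
    using P by (simp add: matrix_mul_assoc orthogonal_matrix_def)
               (simp add: matrix_mul_assoc[symmetric] orthogonal_matrix)
  with Q(2) have "?R \<noteq> mat 1"
    using P by (auto simp: orthogonal_matrix)
  moreover have "orthogonal_matrix ?R"
    using Q P by (simp add: orthogonal_matrix_mul)
  ultimately show ?thesis
    using fixes_act by (auto simp: has_nontrivial_symmetry_def)
qed

lemma has_nontrivial_symmetry_act:
  assumes "orthogonal_matrix P"
  shows "has_nontrivial_symmetry (act P LE) \<longleftrightarrow> has_nontrivial_symmetry LE"
  using has_nontrivial_symmetry_act_imp[of "act P LE" "transpose P"]
        has_nontrivial_symmetry_act_imp[of LE P] assms
  by (auto simp: act_transpose_act)

lemma orthogonal_transport_unique:
  assumes "\<not> has_nontrivial_symmetry LE"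
    and "orthogonal_matrix Q" "act Q R = LE"
    and "orthogonal_matrix Q'" "act Q' R = LE"
  shows "Q = Q'"
proof -
  have "act (Q' ** transpose Q) LE = LE"
    using assms act_transpose_act[of Q R] by (simp add: act_act[symmetric])
  moreover have "orthogonal_matrix (Q' ** transpose Q)"
    using assms by (simp add: orthogonal_matrix_mul)
  ultimately have "Q' ** transpose Q = mat 1"
    using assms(1) by (auto simp: has_nontrivial_symmetry_def)
  then have "Q' ** (transpose Q ** Q) = Q"
    by (simp add: matrix_mul_assoc)
  then show ?thesis
    using assms(2) by (simp add: orthogonal_matrix)
qed

definition O3_orbit :: "'f::finite local_env \<Rightarrow> 'f local_env set" where
  "O3_orbit LE = {act Q LE | Q. orthogonal_matrix Q}"

definition orbit_rep :: "'f::finite local_env \<Rightarrow> 'f local_env" where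
  "orbit_rep LE = (SOME R. R \<in> O3_orbit LE)"

lemma O3_orbit_act:
  assumes P: "orthogonal_matrix P"
  shows "O3_orbit (act P LE) = O3_orbit LE"
proof
  show "O3_orbit (act P LE) \<subseteq> O3_orbit LE"
    using P by (auto simp: O3_orbit_def act_act intro: orthogonal_matrix_mul)
  show "O3_orbit LE \<subseteq> O3_orbit (act P LE)"
  proof
    fix R assume "R \<in> O3_orbit LE"
    then obtain Q where Q: "orthogonal_matrix Q" "R = act Q LE"
      by (auto simp: O3_orbit_def)
    then have "R = act (Q ** transpose P) (act P LE)"
      using P by (simp add: act_act matrix_mul_assoc[symmetric] orthogonal_matrix)
    moreover have "orthogonal_matrix (Q ** transpose P)"
      using Q P by (simp add: orthogonal_matrix_mul)
    ultimately show "R \<in> O3_orbit (act P LE)"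
      by (auto simp: O3_orbit_def)
  qed
qed

lemma orbit_rep_act: "orthogonal_matrix P \<Longrightarrow> orbit_rep (act P LE) = orbit_rep LE"
  by (simp add: orbit_rep_def O3_orbit_act)

lemma ex_transport_from_orbit_rep:
  "\<exists>Q. orthogonal_matrix Q \<and> act Q (orbit_rep LE) = LE"
proof -
  have "LE \<in> O3_orbit LE"
    using orthogonal_matrix_id by (force simp: O3_orbit_def)
  then have "orbit_rep LE \<in> O3_orbit LE"
    unfolding orbit_rep_def by (rule someI)
  then obtain Q where "orthogonal_matrix Q" "orbit_rep LE = act Q LE"
    by (auto simp: O3_orbit_def)
  then show ?thesis
    by (intro exI[of _ "transpose Q"]) (simp add: act_transpose_act)
qed

definition transport_from_rep :: "'f::finite local_env \<Rightarrow> real^3^3" where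
  "transport_from_rep LE = (SOME Q. orthogonal_matrix Q \<and> act Q (orbit_rep LE) = LE)"

lemma
  shows orthogonal_transport_from_rep: "orthogonal_matrix (transport_from_rep LE)"
    and act_transport_from_rep: "act (transport_from_rep LE) (orbit_rep LE) = LE"
  using someI_ex[OF ex_transport_from_orbit_rep[of LE]]
  by (simp_all add: transport_from_rep_def)

lemma transport_from_rep_act:
  assumes "\<not> has_nontrivial_symmetry LE" and P: "orthogonal_matrix P"
  shows "transport_from_rep (act P LE) = P ** transport_from_rep LE"
proof (rule orthogonal_transport_unique)
  show "\<not> has_nontrivial_symmetry (act P LE)"
    using assms has_nontrivial_symmetry_act by blast
  show "act (transport_from_rep (act P LE)) (orbit_rep LE) = act P LE"
    using act_transport_from_rep[of "act P LE"] by (simp add: orbit_rep_act[OF P])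
  show "act (P ** transport_from_rep LE) (orbit_rep LE) = act P LE"
    by (simp add: act_act[symmetric] act_transport_from_rep)
qed (use P in \<open>simp_all add: orthogonal_transport_from_rep orthogonal_matrix_mul\<close>)

definition canonical_frame :: "'f::finite local_env \<Rightarrow> real^3^3" where
  "canonical_frame LE =
     (if has_nontrivial_symmetry LE then 0 else transpose (transport_from_rep LE))"

lemma canonical_frame_act:
  assumes "orthogonal_matrix P"
  shows "canonical_frame (act P LE) = canonical_frame LE ** transpose P"
  using assms
  by (cases "has_nontrivial_symmetry LE")
     (simp_all add: canonical_frame_def has_nontrivial_symmetry_act transport_from_rep_act
                    matrix_transpose_mul)

lemma rank_canonical_frame:
  "rank (canonical_frame LE) = 3 \<longleftrightarrow> \<not> has_nontrivial_symmetry LE"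
  by (simp add: canonical_frame_def rank_orthogonal_matrix orthogonal_transport_from_rep)

lemma equivariant_full_rank_imp_no_symmetry:
  assumes g: "O3_equivariant Nmax g" and LE: "LE \<in> LEs Nmax"
    and rank: "rank (g LE) = 3"
  shows "\<not> has_nontrivial_symmetry LE"
proof
  assume "has_nontrivial_symmetry LE"
  then obtain Q where Q: "orthogonal_matrix Q" "Q \<noteq> mat 1" "act Q LE = LE"
    by (auto simp: has_nontrivial_symmetry_def)
  have "g LE ** transpose Q = g LE"
    using g Q LE unfolding O3_equivariant_def by metis
  moreover have "invertible (g LE)"
    by (rule full_rank_imp_invertible) (simp add: rank)
  ultimately have "transpose Q = mat 1"
    using invertible_mult_right_eq_self by blast
  then have "Q = mat 1"
    by (metis transpose_mat transpose_transpose)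
  with Q(2) show False ..
qed

theorem theorem1:
  fixes Nmax :: nat
  assumes "Nmax \<ge> 1"
  shows "(\<exists>g :: 'f::finite local_env \<Rightarrow> real^3^3. O3_equivariant Nmax g \<and>
            (\<forall>LE \<in> LEs Nmax. rank (g LE) = 3 \<longleftrightarrow>
               \<not> (\<exists>Q. orthogonal_matrix Q \<and> Q \<noteq> mat 1 \<and> act Q LE = LE)))
       \<and> (\<forall>g :: 'f::finite local_env \<Rightarrow> real^3^3. O3_equivariant Nmax g \<longrightarrow>
            (\<forall>LE \<in> LEs Nmax. rank (g LE) = 3 \<longrightarrow>
               \<not> (\<exists>Q. orthogonal_matrix Q \<and> Q \<noteq> mat 1 \<and> act Q LE = LE)))"
proof (intro conjI)
  have "O3_equivariant Nmax canonical_frame"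
    by (simp add: O3_equivariant_def canonical_frame_act)
  then show "\<exists>g :: 'f local_env \<Rightarrow> real^3^3. O3_equivariant Nmax g \<and>
            (\<forall>LE \<in> LEs Nmax. rank (g LE) = 3 \<longleftrightarrow>
               \<not> (\<exists>Q. orthogonal_matrix Q \<and> Q \<noteq> mat 1 \<and> act Q LE = LE))"
    by (intro exI[of _ canonical_frame])
       (auto simp: rank_canonical_frame has_nontrivial_symmetry_def)
qed (use equivariant_full_rank_imp_no_symmetry in \<open>auto simp: has_nontrivial_symmetry_def\<close>)

end
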